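(* Let $p,q$ be integers with $0<p<q$. There exists a set $A\subseteq\mathbb{N}$ such that $$\sum_{n=0}^N R_A(n)=0.5\frac{p^2}{q^2}N^2+1.5\frac{p^2}{q^2}N+O\big(\sqrt{N}\log^{1/2}N\big)\quad (N\to\infty).$$
   Context: $\mathbb{N}$ denotes the set of non-negative integers. For $A\subseteq\mathbb{N}$, $R_A(n)$ denotes the number of ordered pairs $(a,a')$ with $a,a'\in A$ and $a+a'=n$. *)

theory Defs
  imports Complex_Main "HOL-Library.Landau_Symbols"
begin

definition R :: "nat set \<Rightarrow> nat \<Rightarrow> nat" where
  "R A n = card {(a, a'). a \<in> A \<and> a' \<in> A \<and> a + a' = n}"

end

theory Submission
  imports Defs "HOL-Probability.Hoeffding" "HOL-Real_Asymp.Real_Asymp"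
begin

text \<open>Cut \<open>\<nat>\<close> into blocks of \<open>q\<close> consecutive integers and let \<open>A\<close> contain, in the \<open>u\<close>-th
  block, the residues \<open>0, \<dots>, p - 1\<close> shifted cyclically by \<open>\<sigma> u\<close>. Writing the indicator of \<open>A\<close>
  as \<open>p / q + h\<close>, the sum \<open>\<Sum>n\<le>N. R A n\<close> is \<open>(p / q)\<^sup>2 (N + 1) (N + 2) / 2\<close> plus a linear and a
  quadratic form in \<open>h\<close>. As \<open>h\<close> sums to zero over every block and averages to zero over the
  shifts, both forms are, up to a bounded correction, sums of bounded martingale increments
  when the shifts are random, hence of size \<open>O(sqrt (N log N))\<close> by Azuma's inequality. The
  method of conditional expectations, applied to a weighted sum over all \<open>N\<close> of the
  exponential moments from Azuma's proof, yields one sequence of shifts that works for all \<open>N\<close>.\<close>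

lemma exp_le_cosh_plus_sinh:
  fixes y c :: real
  assumes "0 < c" "\<bar>y\<bar> \<le> c"
  shows "exp y \<le> cosh c + y / c * sinh c"
proof -
  define t where "t = (c + y) / (2 * c)"
  have t: "0 \<le> t" "t \<le> 1" "y = (1 - t) * (- c) + t * c"
    using assms by (auto simp: t_def field_simps)
  have "exp ((1 - t) * (- c) + t * c) \<le> (1 - t) * exp (- c) + t * exp c"
    using convex_onD[OF exp_convex t(1,2), of "- c" c] by simp
  also have "\<dots> = cosh c + y / c * sinh c"
    using assms by (simp add: t_def cosh_def sinh_def field_simps)
  finally show ?thesis using t(3) by simp
qed

lemma cosh_le_exp_half_square: "cosh y \<le> exp (y\<^sup>2 / 2)" for y :: real
proof -
  define z where "z = \<bar>y\<bar>"
  \<comment> \<open>Hoeffding's lemma for a fair coin with values \<open>0\<close> and \<open>2 z\<close>\<close>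
  have "- (2 * z) * (1 / 2) + ln (1 + 1 / 2 * (exp (2 * z) - 1)) \<le> (2 * z)\<^sup>2 / 8"
    using Hoeffdings_lemma_aux[of "2 * z" "1 / 2"] by (simp add: z_def)
  then have "ln ((1 + exp (2 * z)) / 2) \<le> z + z\<^sup>2 / 2"
    by (simp add: field_simps power2_eq_square)
  moreover have "0 < (1 + exp (2 * z)) / 2"
    by (simp add: add_pos_pos)
  ultimately have "(1 + exp (2 * z)) / 2 \<le> exp (z + z\<^sup>2 / 2)"
    by (metis exp_le_cancel_iff exp_ln)
  then have "exp (- z) * ((1 + exp (2 * z)) / 2) \<le> exp (- z) * exp (z + z\<^sup>2 / 2)"
    by simp
  moreover have "exp (- z) * ((1 + exp (2 * z)) / 2) = cosh y"
  proof -
    have "cosh y = cosh z"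
      by (cases "0 \<le> y") (simp_all add: z_def)
    then show ?thesis
      by (simp add: cosh_def field_simps flip: exp_add)
  qed
  moreover have "exp (- z) * exp (z + z\<^sup>2 / 2) = exp (y\<^sup>2 / 2)"
    by (simp add: z_def flip: exp_add)
  ultimately show ?thesis by simp
qed

lemma sum_exp_le_card_exp_half_square:
  fixes x :: "'a \<Rightarrow> real"
  assumes "finite S" "\<And>s. s \<in> S \<Longrightarrow> \<bar>x s\<bar> \<le> c" "(\<Sum>s\<in>S. x s) = 0"
  shows "(\<Sum>s\<in>S. exp (x s)) \<le> card S * exp (c\<^sup>2 / 2)"
proof (cases "0 < c")
  case True
  have "(\<Sum>s\<in>S. exp (x s)) \<le> (\<Sum>s\<in>S. cosh c + x s / c * sinh c)"
    using assms True by (intro sum_mono exp_le_cosh_plus_sinh) auto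
  also have "\<dots> = card S * cosh c + sinh c / c * (\<Sum>s\<in>S. x s)"
    by (simp add: sum.distrib sum_distrib_left sum_divide_distrib field_simps)
  also have "\<dots> \<le> card S * exp (c\<^sup>2 / 2)"
    using assms(3) cosh_le_exp_half_square[of c] by (simp add: mult_left_mono)
  finally show ?thesis .
next
  case False
  then have "x s = 0" if "s \<in> S" for s
    using assms(2)[OF that] by linarith
  then show ?thesis
    using mult_left_mono[of 1 "exp (c\<^sup>2 / 2)" "card S"] by simp
qed

lemma sum_cosh_le_card_cosh:
  fixes y :: "'a \<Rightarrow> real"
  assumes "finite S" "\<And>s. s \<in> S \<Longrightarrow> \<bar>y s\<bar> \<le> c" "(\<Sum>s\<in>S. y s) = 0"
  shows "(\<Sum>s\<in>S. cosh (a + y s)) \<le> card S * cosh a * exp (c\<^sup>2 / 2)"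
proof -
  have plus: "(\<Sum>s\<in>S. exp (y s)) \<le> card S * exp (c\<^sup>2 / 2)"
    by (rule sum_exp_le_card_exp_half_square) (use assms in auto)
  have minus: "(\<Sum>s\<in>S. exp (- y s)) \<le> card S * exp (c\<^sup>2 / 2)"
    by (rule sum_exp_le_card_exp_half_square) (use assms in \<open>auto simp: sum_negf\<close>)
  have cosh_exp: "cosh (a + y s) = (exp a * exp (y s) + exp (- a) * exp (- y s)) / 2" for s
    by (simp add: cosh_def flip: exp_add)
  have "(\<Sum>s\<in>S. cosh (a + y s))
      = (exp a * (\<Sum>s\<in>S. exp (y s)) + exp (- a) * (\<Sum>s\<in>S. exp (- y s))) / 2"
    unfolding cosh_exp by (simp add: sum.distrib sum_distrib_left flip: sum_divide_distrib)
  also have "\<dots> \<le> (exp a * (card S * exp (c\<^sup>2 / 2)) + exp (- a) * (card S * exp (c\<^sup>2 / 2))) / 2"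
    using plus minus by (intro divide_right_mono add_mono mult_left_mono) auto
  also have "\<dots> = card S * cosh a * exp (c\<^sup>2 / 2)"
    by (simp add: cosh_def field_simps)
  finally show ?thesis .
qed

lemma abs_le_of_weighted_cosh_le:
  fixes x c w W :: real
  assumes "0 < w" "w * exp (- c) * cosh x \<le> W"
  shows "\<bar>x\<bar> \<le> ln (2 * W / w) + c"
proof -
  have "exp \<bar>x\<bar> \<le> 2 * cosh x"
    by (cases "0 \<le> x") (auto simp: cosh_def add_increasing add_increasing2 less_imp_le)
  also have "\<dots> \<le> 2 * W / w * exp c"
    using assms by (simp add: field_simps exp_minus)
  finally have "exp (\<bar>x\<bar> - c) \<le> 2 * W / w"
    by (simp add: exp_diff pos_divide_le_eq)
  moreover have "0 < 2 * W / w"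
    using calculation exp_gt_zero[of "\<bar>x\<bar> - c"] by linarith
  ultimately have "\<bar>x\<bar> - c \<le> ln (2 * W / w)"
    by (simp add: ln_ge_iff)
  then show ?thesis
    by simp
qed

text \<open>The bound of \<open>exists_choices_with_small_partial_sums\<close> for the weights
  \<open>w i = 1 / (i + 1)\<^sup>2\<close> and scalings \<open>\<theta> i = sqrt (ln (i + 2) / (i + 1))\<close>, which balance
  its two terms.\<close>

lemma abs_le_sqrt_log_bound:
  fixes W B Z :: real and i t :: nat
  defines "\<theta> \<equiv> sqrt (ln (real i + 2) / (real i + 1))"
  assumes W: "1 \<le> W" and t: "t \<le> i + 1"
    and Z: "\<theta> * \<bar>Z\<bar> \<le> ln (2 * W * (real i + 1)\<^sup>2) + (\<theta> * B)\<^sup>2 / 2 * t"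
  shows "\<bar>Z\<bar> \<le> (ln (2 * W) / ln 2 + 2 + B\<^sup>2 / 2) * sqrt ((real i + 1) * ln (real i + 2))"
proof -
  define L where "L = ln (real i + 2)"
  define C where "C = ln (2 * W) / ln 2 + 2 + B\<^sup>2 / 2"
  have L: "ln 2 \<le> L" "0 < L" "\<theta> = sqrt L / sqrt (real i + 1)"
    by (simp_all add: L_def \<theta>_def real_sqrt_divide)
  have "ln (2 * W * (real i + 1)\<^sup>2) = ln (2 * W) + 2 * ln (real i + 1)"
    using W by (simp add: ln_mult_pos ln_realpow)
  also have "\<dots> \<le> ln (2 * W) / ln 2 * L + 2 * L"
    using L W by (auto simp: L_def field_simps intro!: add_mono mult_left_mono)
  finally have log_weight: "ln (2 * W * (real i + 1)\<^sup>2) \<le> ln (2 * W) / ln 2 * L + 2 * L" .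
  have "L * t \<le> L * (real i + 1)"
    using L t by (intro mult_left_mono) auto
  moreover have "\<theta>\<^sup>2 * t = L * t / (real i + 1)"
    by (simp add: \<theta>_def L_def)
  ultimately have "\<theta>\<^sup>2 * t \<le> L"
    by (simp add: divide_le_eq mult.commute)
  then have "B\<^sup>2 / 2 * (\<theta>\<^sup>2 * t) \<le> B\<^sup>2 / 2 * L"
    by (intro mult_left_mono) auto
  moreover have "C * L = ln (2 * W) / ln 2 * L + 2 * L + B\<^sup>2 / 2 * L"
    by (simp add: C_def algebra_simps)
  ultimately have "\<theta> * \<bar>Z\<bar> \<le> C * L"
    using Z log_weight by (simp add: power_mult_distrib algebra_simps)
  moreover have "0 < \<theta>"
    using L by simp
  ultimately have "\<bar>Z\<bar> \<le> C * (L / \<theta>)"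
    by (simp add: field_simps)
  also have "L / \<theta> = L / sqrt L * sqrt (real i + 1)"
    unfolding L(3) by simp
  also have "\<dots> = sqrt ((real i + 1) * L)"
    using L(2) by (simp add: real_div_sqrt real_sqrt_mult)
  finally show ?thesis
    by (simp add: C_def L_def)
qed

lemma greedy_choice_sequence:
  fixes \<Phi> :: "(nat \<Rightarrow> 'a) \<Rightarrow> nat \<Rightarrow> real"
  assumes "finite S" "S \<noteq> {}"
    and local: "\<And>\<sigma> \<sigma>' t. (\<And>u. u < t \<Longrightarrow> \<sigma> u = \<sigma>' u) \<Longrightarrow> \<Phi> \<sigma> t = \<Phi> \<sigma>' t"
    and average: "\<And>\<sigma> t. (\<Sum>s\<in>S. \<Phi> (\<sigma>(t := s)) (Suc t)) \<le> card S * \<Phi> \<sigma> t"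
  shows "\<exists>\<sigma>. \<forall>t. \<Phi> \<sigma> t \<le> \<Phi> \<sigma> 0"
proof -
  have "\<exists>s. \<Phi> (\<sigma>(t := s)) (Suc t) \<le> \<Phi> \<sigma> t" for \<sigma> t
  proof -
    let ?f = "\<lambda>s. \<Phi> (\<sigma>(t := s)) (Suc t)"
    have "Min (?f ` S) \<in> ?f ` S"
      using assms(1,2) by (intro Min_in) auto
    then obtain s where s: "s \<in> S" "?f s = Min (?f ` S)"
      by auto
    have s_min: "?f s \<le> ?f s'" if "s' \<in> S" for s'
      unfolding s(2) using assms(1) that by (intro Min_le) auto
    have "card S * \<Phi> (\<sigma>(t := s)) (Suc t) \<le> (\<Sum>s'\<in>S. \<Phi> (\<sigma>(t := s')) (Suc t))"
      using sum_mono[of S "\<lambda>_. ?f s" ?f] s_min by simp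
    also have "\<dots> \<le> card S * \<Phi> \<sigma> t" by (rule average)
    finally show ?thesis
      using assms(1,2) by (auto simp: card_gt_0_iff)
  qed
  then obtain next_choice where next_choice: "\<And>\<sigma> t. \<Phi> (\<sigma>(t := next_choice \<sigma> t)) (Suc t) \<le> \<Phi> \<sigma> t"
    by metis
  define seq where "seq = rec_nat (\<lambda>_. undefined) (\<lambda>t \<sigma>. \<sigma>(t := next_choice \<sigma> t))"
  have seq_Suc: "seq (Suc t) = (seq t)(t := next_choice (seq t) t)" for t
    by (simp add: seq_def)
  have seq_decreasing: "\<Phi> (seq t) t \<le> \<Phi> (seq 0) 0" for t
  proof (induction t)
    case (Suc t)
    then show ?case
      using next_choice[of "seq t" t] unfolding seq_Suc by linarith
  qed simp
  define \<sigma> where "\<sigma> u = seq (Suc u) u" for u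
  have seq_eq: "u < t \<Longrightarrow> seq t u = \<sigma> u" for t u
    by (induction t) (auto simp: seq_Suc \<sigma>_def less_Suc_eq)
  have "\<Phi> \<sigma> t \<le> \<Phi> \<sigma> 0" for t
    using seq_decreasing[of t] local[of t "seq t" \<sigma>] local[of 0 "seq 0" \<sigma>] seq_eq by simp
  then show ?thesis by blast
qed

text \<open>\<open>X \<sigma> u i\<close> is the \<open>u\<close>-th increment of the \<open>i\<close>-th sequence when the choices
  \<open>\<sigma> 0, \<sigma> 1, \<dots>\<close> are made; for uniformly random choices in \<open>S\<close> every sequence is a
  martingale with increments bounded by \<open>B\<close>.\<close>

locale choice_martingales =
  fixes S :: "'a set" and X :: "(nat \<Rightarrow> 'a) \<Rightarrow> nat \<Rightarrow> nat \<Rightarrow> real" and B :: real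
  assumes finite_choices: "finite S" and choices_nonempty: "S \<noteq> {}"
    and adapted: "\<And>\<sigma> \<sigma>' u i. (\<And>v. v \<le> u \<Longrightarrow> \<sigma> v = \<sigma>' v) \<Longrightarrow> X \<sigma> u i = X \<sigma>' u i"
    and mean_zero: "\<And>\<sigma> u i. (\<Sum>s\<in>S. X (\<sigma>(u := s)) u i) = 0"
    and bounded: "\<And>\<sigma> u i. \<bar>X \<sigma> u i\<bar> \<le> B"
begin

lemma partial_sum_cong:
  "(\<And>u. u < t \<Longrightarrow> \<sigma> u = \<sigma>' u) \<Longrightarrow> (\<Sum>u<t. X \<sigma> u i) = (\<Sum>u<t. X \<sigma>' u i)"
  by (intro sum.cong refl adapted) auto

lemma abs_partial_sum_le: "\<bar>\<Sum>u<t. X \<sigma> u i\<bar> \<le> t * B"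
proof -
  have "\<bar>\<Sum>u<t. X \<sigma> u i\<bar> \<le> (\<Sum>u<t. B)"
    by (rule order_trans[OF sum_abs sum_mono[OF bounded]])
  then show ?thesis by simp
qed

definition potential_term :: "(nat \<Rightarrow> real) \<Rightarrow> (nat \<Rightarrow> real) \<Rightarrow> (nat \<Rightarrow> 'a) \<Rightarrow> nat \<Rightarrow> nat \<Rightarrow> real"
  where "potential_term \<theta> w \<sigma> t i =
    w i * exp (- ((\<theta> i * B)\<^sup>2 / 2) * t) * cosh (\<theta> i * (\<Sum>u<t. X \<sigma> u i))"

lemma potential_term_nonneg: "0 \<le> w i \<Longrightarrow> 0 \<le> potential_term \<theta> w \<sigma> t i"
  by (simp add: potential_term_def)

lemma potential_term_initial: "potential_term \<theta> w \<sigma> 0 = w"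
  by (simp add: potential_term_def fun_eq_iff)

lemma potential_term_step:
  assumes "0 \<le> w i"
  shows "(\<Sum>s\<in>S. potential_term \<theta> w (\<sigma>(t := s)) (Suc t) i) \<le> card S * potential_term \<theta> w \<sigma> t i"
proof -
  define Z where "Z = (\<Sum>u<t. X \<sigma> u i)"
  define c where "c = (\<theta> i * B)\<^sup>2 / 2"
  have partial_sum_Suc: "(\<Sum>u<Suc t. X (\<sigma>(t := s)) u i) = Z + X (\<sigma>(t := s)) t i" for s
    using partial_sum_cong[of t "\<sigma>(t := s)" \<sigma> i] by (simp add: Z_def)
  have "(\<Sum>s\<in>S. cosh (\<theta> i * Z + \<theta> i * X (\<sigma>(t := s)) t i))
      \<le> card S * cosh (\<theta> i * Z) * exp ((\<bar>\<theta> i\<bar> * B)\<^sup>2 / 2)"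
  proof (rule sum_cosh_le_card_cosh[OF finite_choices])
    show "\<bar>\<theta> i * X (\<sigma>(t := s)) t i\<bar> \<le> \<bar>\<theta> i\<bar> * B" for s
      by (simp add: abs_mult mult_left_mono bounded)
    show "(\<Sum>s\<in>S. \<theta> i * X (\<sigma>(t := s)) t i) = 0"
      by (simp add: mean_zero flip: sum_distrib_left)
  qed
  then have cosh_sum: "(\<Sum>s\<in>S. cosh (\<theta> i * Z + \<theta> i * X (\<sigma>(t := s)) t i))
      \<le> card S * cosh (\<theta> i * Z) * exp c"
    by (simp add: c_def power_mult_distrib)
  have "exp (- c * Suc t) = exp (- c * t) * exp (- c)"
    by (simp add: algebra_simps flip: exp_add)
  then have "(\<Sum>s\<in>S. potential_term \<theta> w (\<sigma>(t := s)) (Suc t) i)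
      = w i * exp (- c * t) * exp (- c) * (\<Sum>s\<in>S. cosh (\<theta> i * Z + \<theta> i * X (\<sigma>(t := s)) t i))"
    unfolding potential_term_def partial_sum_Suc c_def[symmetric] distrib_left
    by (simp add: sum_distrib_left mult.assoc)
  also have "\<dots> \<le> w i * exp (- c * t) * exp (- c) * (card S * cosh (\<theta> i * Z) * exp c)"
    using assms cosh_sum by (intro mult_left_mono) auto
  also have "\<dots> = card S * potential_term \<theta> w \<sigma> t i"
    by (simp add: potential_term_def Z_def c_def algebra_simps flip: exp_add)
  finally show ?thesis .
qed

lemma summable_potential_term:
  assumes "\<And>i. 0 \<le> w i" "summable w" "\<And>i. \<bar>\<theta> i\<bar> \<le> 1"
  shows "summable (potential_term \<theta> w \<sigma> t)"
proof (rule summable_comparison_test[of _ "\<lambda>i. w i * cosh (t * B)"])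
  have "potential_term \<theta> w \<sigma> t i \<le> w i * cosh (t * B)" for i
  proof -
    have "\<bar>\<theta> i * (\<Sum>u<t. X \<sigma> u i)\<bar> \<le> 1 * (t * B)"
      unfolding abs_mult using assms(3) abs_partial_sum_le by (intro mult_mono) auto
    then have "cosh (\<theta> i * (\<Sum>u<t. X \<sigma> u i)) \<le> cosh (t * B)"
      by (metis cosh_real_abs cosh_real_nonneg_le_iff abs_ge_zero order_trans mult_1)
    moreover have "exp (- ((\<theta> i * B)\<^sup>2 / 2) * t) \<le> 1"
      by simp
    ultimately have "potential_term \<theta> w \<sigma> t i \<le> w i * 1 * cosh (t * B)"
      unfolding potential_term_def using assms(1)[of i] by (intro mult_mono) auto
    then show ?thesis by simp
  qed
  then show "\<exists>N. \<forall>n\<ge>N. norm (potential_term \<theta> w \<sigma> t n) \<le> w n * cosh (t * B)"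
    using potential_term_nonneg assms(1) by auto
  show "summable (\<lambda>i. w i * cosh (t * B))"
    by (rule summable_mult2[OF assms(2)])
qed

text \<open>Derandomised Azuma inequality, for infinitely many sequences at once: the choices are made
  greedily so that the potential \<open>\<Sum>i. potential_term \<theta> w \<sigma> t i\<close> never increases.\<close>

theorem exists_choices_with_small_partial_sums:
  assumes \<theta>: "\<And>i. 0 < \<theta> i" "\<And>i. \<theta> i \<le> 1" and w: "\<And>i. 0 < w i" "summable w"
  shows "\<exists>\<sigma>. \<forall>i t. \<theta> i * \<bar>\<Sum>u<t. X \<sigma> u i\<bar> \<le> ln (2 * suminf w / w i) + (\<theta> i * B)\<^sup>2 / 2 * t"
proof -
  define \<Phi> where "\<Phi> \<sigma> t = suminf (potential_term \<theta> w \<sigma> t)" for \<sigma> t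
  have summable: "summable (potential_term \<theta> w \<sigma> t)" for \<sigma> t
    using w \<theta> by (intro summable_potential_term) (auto simp: less_imp_le)
  have "\<exists>\<sigma>. \<forall>t. \<Phi> \<sigma> t \<le> \<Phi> \<sigma> 0"
  proof (rule greedy_choice_sequence[OF finite_choices choices_nonempty])
    show "\<Phi> \<sigma> t = \<Phi> \<sigma>' t" if "\<And>u. u < t \<Longrightarrow> \<sigma> u = \<sigma>' u" for \<sigma> \<sigma>' t
      unfolding \<Phi>_def potential_term_def using partial_sum_cong[of t \<sigma> \<sigma>'] that by simp
    show "(\<Sum>s\<in>S. \<Phi> (\<sigma>(t := s)) (Suc t)) \<le> card S * \<Phi> \<sigma> t" for \<sigma> t
    proof -
      have "(\<Sum>s\<in>S. \<Phi> (\<sigma>(t := s)) (Suc t)) = (\<Sum>i. \<Sum>s\<in>S. potential_term \<theta> w (\<sigma>(t := s)) (Suc t) i)"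
        unfolding \<Phi>_def using summable by (intro suminf_sum[symmetric])
      also have "\<dots> \<le> (\<Sum>i. card S * potential_term \<theta> w \<sigma> t i)"
        using w by (intro suminf_le potential_term_step summable_sum summable_mult summable)
          (auto simp: less_imp_le)
      also have "\<dots> = card S * \<Phi> \<sigma> t"
        unfolding \<Phi>_def by (intro suminf_mult summable)
      finally show ?thesis .
    qed
  qed
  then obtain \<sigma> where \<sigma>: "\<And>t. \<Phi> \<sigma> t \<le> \<Phi> \<sigma> 0"
    by blast
  have "\<theta> i * \<bar>\<Sum>u<t. X \<sigma> u i\<bar> \<le> ln (2 * suminf w / w i) + (\<theta> i * B)\<^sup>2 / 2 * t" for i t
  proof -
    have "potential_term \<theta> w \<sigma> t i \<le> \<Phi> \<sigma> t"
      unfolding \<Phi>_def using sum_le_suminf[OF summable, of "{i}"] potential_term_nonneg w(1)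
      by (simp add: less_imp_le)
    also have "\<dots> \<le> suminf w"
      using \<sigma>[of t] by (simp add: \<Phi>_def potential_term_initial)
    finally have "w i * exp (- ((\<theta> i * B)\<^sup>2 / 2 * t)) * cosh (\<theta> i * (\<Sum>u<t. X \<sigma> u i)) \<le> suminf w"
      by (simp only: potential_term_def minus_mult_left)
    from abs_le_of_weighted_cosh_le[OF w(1) this] show ?thesis
      using \<theta>(1)[of i] by (simp add: abs_mult)
  qed
  then show ?thesis by blast
qed

corollary exists_choices_with_sqrt_log_partial_sums:
  "\<exists>\<sigma> C. \<forall>i t. t \<le> i + 1 \<longrightarrow> \<bar>\<Sum>u<t. X \<sigma> u i\<bar> \<le> C * sqrt ((real i + 1) * ln (real i + 2))"
proof -
  define \<theta> where "\<theta> i = sqrt (ln (real i + 2) / (real i + 1))" for i :: nat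
  define w where "w i = 1 / (real i + 1)\<^sup>2" for i :: nat
  have \<theta>: "0 < \<theta> i" "\<theta> i \<le> 1" for i
    using ln_le_minus_one[of "real i + 2"] by (auto simp: \<theta>_def)
  have "summable (\<lambda>i. inverse (real (Suc i) ^ 2))"
    using inverse_power_summable[of 2] by (subst summable_Suc_iff) simp
  then have w: "summable w"
    unfolding w_def[abs_def] by (simp add: inverse_eq_divide add.commute)
  obtain \<sigma> where \<sigma>: "\<And>i t. \<theta> i * \<bar>\<Sum>u<t. X \<sigma> u i\<bar>
      \<le> ln (2 * suminf w * (real i + 1)\<^sup>2) + (\<theta> i * B)\<^sup>2 / 2 * t"
    using exists_choices_with_small_partial_sums[of \<theta> w] \<theta> w by (auto simp: w_def)
  have "w 0 \<le> suminf w"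
    using sum_le_suminf[OF w, of "{0}"] by (simp add: w_def)
  then have W: "1 \<le> suminf w"
    by (simp add: w_def)
  show ?thesis
    using abs_le_sqrt_log_bound[OF W _ \<sigma>[unfolded \<theta>_def]] by blast
qed

end

lemma sum_lessThan_rotate:
  fixes f :: "nat \<Rightarrow> 'a::comm_monoid_add"
  assumes "0 < q"
  shows "(\<Sum>j<q. f ((j + s) mod q)) = (\<Sum>j<q. f j)"
proof -
  have inj: "inj_on (\<lambda>j. (j + s) mod q) {..<q}"
  proof (rule inj_onI)
    fix x y assume "x \<in> {..<q}" "y \<in> {..<q}" "(x + s) mod q = (y + s) mod q"
    then show "x = y"
      using nat_mod_eq_iff[of "x + s" q "y + s"] nat_mod_eq_iff[of x q y] by force
  qed
  then have "(\<lambda>j. (j + s) mod q) ` {..<q} = {..<q}"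
    using assms by (intro endo_inj_surj) auto
  then show ?thesis
    using sum.reindex[OF inj, of f] by simp
qed

lemma real_R_eq_sum: "real (R A n) = (\<Sum>a\<le>n. of_bool (a \<in> A) * of_bool (n - a \<in> A))"
proof -
  let ?P = "{a \<in> {..n}. a \<in> A \<and> n - a \<in> A}"
  have "{(a, a'). a \<in> A \<and> a' \<in> A \<and> a + a' = n} = (\<lambda>a. (a, n - a)) ` ?P"
    by (auto simp: image_def)
  moreover have "inj_on (\<lambda>a. (a, n - a)) ?P"
    by (auto intro: inj_onI)
  ultimately have "R A n = card ?P"
    unfolding R_def by (simp add: card_image)
  moreover have "?P = {..n} \<inter> {a. a \<in> A \<and> n - a \<in> A}"
    by auto
  ultimately show ?thesis
    by (simp add: of_bool_conj flip: sum_of_bool_eq)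
qed

lemma sum_convolution_eq_sum_square:
  fixes g :: "nat \<Rightarrow> nat \<Rightarrow> 'a::comm_monoid_add"
  assumes "N < K"
  shows "(\<Sum>n\<le>N. \<Sum>a\<le>n. g a (n - a)) = (\<Sum>a<K. \<Sum>b<K. if a + b \<le> N then g a b else 0)"
proof -
  have "(\<Sum>n\<le>N. \<Sum>a\<le>n. g a (n - a)) = (\<Sum>(a, b)\<in>{(a, b). a + b \<le> N}. g a b)"
    by (rule sum.triangle_reindex_eq[symmetric])
  also have "{(a, b). a + b \<le> N} = {x \<in> {..<K} \<times> {..<K}. fst x + snd x \<le> N}"
    using assms by auto
  also have "(\<Sum>(a, b)\<in>\<dots>. g a b) = (\<Sum>(a, b)\<in>{..<K} \<times> {..<K}. if a + b \<le> N then g a b else 0)"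
    by (simp add: sum.inter_filter case_prod_beta)
  also have "\<dots> = (\<Sum>a<K. \<Sum>b<K. if a + b \<le> N then g a b else 0)"
    by (rule sum.cartesian_product[symmetric])
  finally show ?thesis .
qed

lemma sum_square_product_by_max:
  fixes h :: "nat \<Rightarrow> 'a::comm_semiring_1"
  shows "(\<Sum>a<K. \<Sum>b<K. if a + b \<le> N then h a * h b else 0)
    = (\<Sum>m<K. (if 2 * m \<le> N then (h m)\<^sup>2 else 0) + 2 * h m * (\<Sum>b<min m (N + 1 - m). h b))"
proof (induction K)
  case (Suc K)
  have row: "(\<Sum>b<K. if K + b \<le> N then h K * h b else 0) = h K * (\<Sum>b<min K (N + 1 - K). h b)"
  proof -
    have "(\<Sum>b<K. if K + b \<le> N then h K * h b else 0) = (\<Sum>b\<in>{b \<in> {..<K}. K + b \<le> N}. h K * h b)"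
      by (rule sum.inter_filter[symmetric]) simp
    also have "{b \<in> {..<K}. K + b \<le> N} = {..<min K (N + 1 - K)}"
      by auto
    finally show ?thesis
      by (simp add: sum_distrib_left)
  qed
  have "(\<Sum>a<K. if a + K \<le> N then h a * h K else 0) = (\<Sum>b<K. if K + b \<le> N then h K * h b else 0)"
    by (simp only: add.commute mult.commute)
  then have column: "(\<Sum>a<K. if a + K \<le> N then h a * h K else 0) = h K * (\<Sum>b<min K (N + 1 - K). h b)"
    using row by simp
  have "(\<Sum>a<Suc K. \<Sum>b<Suc K. if a + b \<le> N then h a * h b else 0)
      = (\<Sum>a<K. \<Sum>b<K. if a + b \<le> N then h a * h b else 0)
        + (\<Sum>a<K. if a + K \<le> N then h a * h K else 0)
        + (\<Sum>b<K. if K + b \<le> N then h K * h b else 0)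
        + (if K + K \<le> N then h K * h K else 0)"
    by (simp add: sum.distrib algebra_simps)
  then show ?case
    unfolding row column Suc.IH by (simp add: power2_eq_square mult_2 algebra_simps)
qed simp

lemma sum_convolution_shifted:
  fixes h :: "nat \<Rightarrow> real"
  assumes "N < K"
  shows "(\<Sum>n\<le>N. \<Sum>a\<le>n. (\<alpha> + h a) * (\<alpha> + h (n - a)))
    = \<alpha>\<^sup>2 * ((real N + 1) * (real N + 2) / 2) + 2 * \<alpha> * (\<Sum>k\<le>N + 1. \<Sum>b<k. h b)
      + (\<Sum>m<K. (if 2 * m \<le> N then (h m)\<^sup>2 else 0) + 2 * h m * (\<Sum>b<min m (N + 1 - m). h b))"
proof -
  have sum_const: "(\<Sum>n\<le>N. \<Sum>a\<le>n. \<alpha>\<^sup>2) = \<alpha>\<^sup>2 * ((real N + 1) * (real N + 2) / 2)"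
    by (induction N) (simp_all add: field_simps)
  have reverse: "(\<Sum>a\<le>n. h (n - a)) = (\<Sum>a\<le>n. h a)" for n
    using sum.atLeastAtMost_rev[of h 0 n] by (simp add: atLeast0AtMost)
  have sum_linear: "(\<Sum>n\<le>N. \<Sum>a\<le>n. h a) = (\<Sum>k\<le>N + 1. \<Sum>b<k. h b)"
    by (simp add: sum.atMost_Suc_shift lessThan_Suc_atMost del: sum.atMost_Suc)
  have sum_quadratic: "(\<Sum>n\<le>N. \<Sum>a\<le>n. h a * h (n - a))
      = (\<Sum>m<K. (if 2 * m \<le> N then (h m)\<^sup>2 else 0) + 2 * h m * (\<Sum>b<min m (N + 1 - m). h b))"
    using sum_convolution_eq_sum_square[OF assms, of "\<lambda>a b. h a * h b"] sum_square_product_by_max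
    by simp
  have "(\<Sum>n\<le>N. \<Sum>a\<le>n. (\<alpha> + h a) * (\<alpha> + h (n - a)))
      = (\<Sum>n\<le>N. \<Sum>a\<le>n. \<alpha>\<^sup>2) + \<alpha> * (\<Sum>n\<le>N. \<Sum>a\<le>n. h a) + \<alpha> * (\<Sum>n\<le>N. \<Sum>a\<le>n. h (n - a))
        + (\<Sum>n\<le>N. \<Sum>a\<le>n. h a * h (n - a))"
    by (simp add: sum.distrib sum_distrib_left algebra_simps power2_eq_square)
  then show ?thesis
    unfolding sum_const reverse sum_linear sum_quadratic by simp
qed

locale rotated_blocks =
  fixes p q :: nat
  assumes p_pos: "0 < p" and p_less_q: "p < q"
begin

lemma q_pos: "0 < q"
  using p_pos p_less_q by simp

definition block_set :: "(nat \<Rightarrow> nat) \<Rightarrow> nat set"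
  where "block_set \<sigma> = {m. (m mod q + \<sigma> (m div q)) mod q < p}"

definition density :: real
  where "density = p / q"

definition deviation :: "(nat \<Rightarrow> nat) \<Rightarrow> nat \<Rightarrow> real"
  where "deviation \<sigma> m = of_bool (m \<in> block_set \<sigma>) - density"

definition discrepancy :: "(nat \<Rightarrow> nat) \<Rightarrow> nat \<Rightarrow> real"
  where "discrepancy \<sigma> k = (\<Sum>b<k. deviation \<sigma> b)"

lemma density_bounds: "0 < density" "density < 1"
  using p_pos p_less_q by (auto simp: density_def)

lemma sum_rotated_residues: "(\<Sum>j<q. of_bool ((j + s) mod q < p)) = (p :: real)"
proof -
  have "(\<Sum>j<q. of_bool ((j + s) mod q < p)) = (\<Sum>j<q. of_bool (j < p) :: real)"
    using sum_lessThan_rotate[OF q_pos, of "\<lambda>j. of_bool (j < p) :: real"] by simp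
  also have "\<dots> = p"
  proof -
    have "{..<q} \<inter> {j. j < p} = {..<p}"
      using p_less_q by auto
    then show ?thesis by simp
  qed
  finally show ?thesis .
qed

lemma div_block: "k \<in> {u * q..<u * q + q} \<Longrightarrow> k div q = u"
  using q_pos by (auto intro!: div_nat_eqI simp: algebra_simps)

lemma mod_block: "k \<in> {u * q..<u * q + q} \<Longrightarrow> k mod q = k - u * q"
  using div_block[of k u] by (metis minus_div_mult_eq_mod mult.commute)

lemma sum_deviation_block: "(\<Sum>k\<in>{u * q..<u * q + q}. deviation \<sigma> k) = 0"
proof -
  have "(\<Sum>k\<in>{u * q..<u * q + q}. deviation \<sigma> k) = (\<Sum>j<q. deviation \<sigma> (u * q + j))"
    by (simp add: sum.atLeastLessThan_shift_0[of _ "u * q"] atLeast0LessThan)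
  also have "\<dots> = (\<Sum>j<q. of_bool ((j + \<sigma> u) mod q < p) - density)"
    using div_block mod_block by (intro sum.cong) (auto simp: deviation_def block_set_def)
  also have "\<dots> = 0"
    using q_pos by (simp add: sum_subtractf sum_rotated_residues density_def)
  finally show ?thesis .
qed

lemma sum_deviation_choices:
  "k \<in> {u * q..<u * q + q} \<Longrightarrow> (\<Sum>s<q. deviation (\<sigma>(u := s)) k) = 0"
  using div_block[of k u] q_pos
  by (simp add: deviation_def block_set_def sum_subtractf add.commute[of "k mod q"]
      sum_rotated_residues density_def)

lemma abs_deviation_le: "\<bar>deviation \<sigma> k\<bar> \<le> 1"
  using density_bounds by (simp add: deviation_def)

lemma deviation_cong: "\<sigma> (k div q) = \<sigma>' (k div q) \<Longrightarrow> deviation \<sigma> k = deviation \<sigma>' k"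
  by (simp add: deviation_def block_set_def)

lemma discrepancy_cong:
  "(\<And>b. b < k \<Longrightarrow> \<sigma> (b div q) = \<sigma>' (b div q)) \<Longrightarrow> discrepancy \<sigma> k = discrepancy \<sigma>' k"
  unfolding discrepancy_def by (intro sum.cong refl deviation_cong) auto

lemma discrepancy_Suc: "discrepancy \<sigma> (Suc k) = discrepancy \<sigma> k + deviation \<sigma> k"
  by (simp add: discrepancy_def)

lemma discrepancy_split:
  "a \<le> b \<Longrightarrow> discrepancy \<sigma> b = discrepancy \<sigma> a + (\<Sum>k\<in>{a..<b}. deviation \<sigma> k)"
  unfolding discrepancy_def by (metis atLeast0LessThan sum.atLeastLessThan_concat zero_le)

lemma discrepancy_block_start: "discrepancy \<sigma> (u * q) = 0"
proof (induction u)
  case (Suc u)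
  then show ?case
    using discrepancy_split[of "u * q" "Suc u * q" \<sigma>] sum_deviation_block by (simp add: add.commute)
qed (simp add: discrepancy_def)

lemma discrepancy_from_block_start:
  "u * q \<le> k \<Longrightarrow> discrepancy \<sigma> k = (\<Sum>b\<in>{u * q..<k}. deviation \<sigma> b)"
  using discrepancy_split[of "u * q" k \<sigma>] discrepancy_block_start by simp

lemma abs_discrepancy_le: "\<bar>discrepancy \<sigma> k\<bar> \<le> q"
proof -
  define u where "u = k div q"
  have k: "u * q \<le> k" "k < u * q + q"
    using q_pos by (auto simp: u_def) (metis add.commute div_mult_mod_eq mod_less_divisor nat_add_left_cancel_less)
  have "\<bar>discrepancy \<sigma> k\<bar> \<le> (\<Sum>b\<in>{u * q..<k}. \<bar>deviation \<sigma> b\<bar>)"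
    unfolding discrepancy_from_block_start[OF k(1)] by (rule sum_abs)
  also have "\<dots> \<le> (\<Sum>b\<in>{u * q..<k}. 1)"
    by (intro sum_mono abs_deviation_le)
  also have "\<dots> = real (k - u * q)"
    by simp
  also have "\<dots> \<le> q"
    using k by (simp only: of_nat_le_iff)
  finally show ?thesis .
qed

text \<open>Grouping the pairs of \<open>\<Sum>\<^bsub>a + b \<le> N\<^esub> h a * h b\<close> by their larger element \<open>k\<close> gives the
  terms \<open>2 * h k * discrepancy (min k (N + 1 - k))\<close>. Evaluated at the start of the block of \<open>k\<close>
  instead, the discrepancy no longer depends on the choice for that block, which makes the
  block sums martingale increments; the correction telescopes to zero in every block but one.\<close>

definition quadratic_increment :: "(nat \<Rightarrow> nat) \<Rightarrow> nat \<Rightarrow> nat \<Rightarrow> real"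
  where "quadratic_increment \<sigma> u N =
    (\<Sum>k\<in>{u * q..<u * q + q}. 2 * deviation \<sigma> k * discrepancy \<sigma> (min (u * q) (N + 1 - k)))"

definition quadratic_correction :: "(nat \<Rightarrow> nat) \<Rightarrow> nat \<Rightarrow> nat \<Rightarrow> real"
  where "quadratic_correction \<sigma> u N = (\<Sum>k\<in>{u * q..<u * q + q}.
    (if 2 * k \<le> N then (deviation \<sigma> k)\<^sup>2 else 0)
    + 2 * deviation \<sigma> k * (discrepancy \<sigma> (min k (N + 1 - k)) - discrepancy \<sigma> (min (u * q) (N + 1 - k))))"

definition linear_increment :: "(nat \<Rightarrow> nat) \<Rightarrow> nat \<Rightarrow> nat \<Rightarrow> real"
  where "linear_increment \<sigma> u N = (\<Sum>k\<in>{u * q..<u * q + q}. if k \<le> N + 1 then discrepancy \<sigma> k else 0)"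

lemma discrepancy_before_block_cong:
  assumes "k \<le> u * q" "\<And>v. v < u \<Longrightarrow> \<sigma> v = \<sigma>' v"
  shows "discrepancy \<sigma> k = discrepancy \<sigma>' k"
proof (rule discrepancy_cong)
  fix b assume "b < k"
  then have "b div q < u"
    using assms(1) by (simp add: less_mult_imp_div_less)
  then show "\<sigma> (b div q) = \<sigma>' (b div q)"
    by (rule assms(2))
qed

lemma quadratic_increment_cong:
  "(\<And>v. v \<le> u \<Longrightarrow> \<sigma> v = \<sigma>' v) \<Longrightarrow> quadratic_increment \<sigma> u N = quadratic_increment \<sigma>' u N"
  unfolding quadratic_increment_def
  by (intro sum.cong refl arg_cong2[where f = "(*)"] arg_cong[where f = "(*) 2"]
      deviation_cong discrepancy_before_block_cong[of _ u]) (auto simp: div_block)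

lemma linear_increment_cong:
  "(\<And>v. v \<le> u \<Longrightarrow> \<sigma> v = \<sigma>' v) \<Longrightarrow> linear_increment \<sigma> u N = linear_increment \<sigma>' u N"
  unfolding linear_increment_def
  by (intro sum.cong refl if_cong discrepancy_before_block_cong[of _ "Suc u"]) auto

lemma sum_quadratic_increment_choices: "(\<Sum>s<q. quadratic_increment (\<sigma>(u := s)) u N) = 0"
proof -
  have "discrepancy (\<sigma>(u := s)) (min (u * q) (N + 1 - k)) = discrepancy \<sigma> (min (u * q) (N + 1 - k))"
    for s k
    by (rule discrepancy_before_block_cong[of _ u]) auto
  then have "(\<Sum>s<q. quadratic_increment (\<sigma>(u := s)) u N)
      = (\<Sum>k\<in>{u * q..<u * q + q}. 2 * discrepancy \<sigma> (min (u * q) (N + 1 - k))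
          * (\<Sum>s<q. deviation (\<sigma>(u := s)) k))"
    unfolding quadratic_increment_def
    by (subst sum.swap) (simp add: sum_distrib_left sum_distrib_right mult_ac)
  also have "\<dots> = 0"
    by (simp add: sum_deviation_choices)
  finally show ?thesis .
qed

lemma sum_linear_increment_choices: "(\<Sum>s<q. linear_increment (\<sigma>(u := s)) u N) = 0"
proof -
  have "discrepancy (\<sigma>(u := s)) k = (\<Sum>b\<in>{u * q..<k}. deviation (\<sigma>(u := s)) b)"
    if "k \<in> {u * q..<u * q + q}" for s k
    using discrepancy_from_block_start that by simp
  then have "(\<Sum>s<q. linear_increment (\<sigma>(u := s)) u N)
      = (\<Sum>k\<in>{u * q..<u * q + q}. if k \<le> N + 1 then (\<Sum>b\<in>{u * q..<k}. \<Sum>s<q. deviation (\<sigma>(u := s)) b) else 0)"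
    unfolding linear_increment_def
    by (subst sum.swap) (intro sum.cong refl, auto intro: sum.swap)
  also have "\<dots> = 0"
    by (intro sum.neutral) (auto simp: sum_deviation_choices)
  finally show ?thesis .
qed

lemma abs_quadratic_increment_le: "\<bar>quadratic_increment \<sigma> u N\<bar> \<le> 2 * q\<^sup>2"
proof -
  have "\<bar>2 * deviation \<sigma> k * discrepancy \<sigma> j\<bar> \<le> 2 * real q" for k j
    using abs_deviation_le[of \<sigma> k] abs_discrepancy_le[of \<sigma> j]
    by (simp add: abs_mult mult_mono[of _ 1 _ "real q", simplified])
  then have "\<bar>quadratic_increment \<sigma> u N\<bar> \<le> (\<Sum>k\<in>{u * q..<u * q + q}. 2 * real q)"
    unfolding quadratic_increment_def by (intro order_trans[OF sum_abs sum_mono])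
  then show ?thesis
    by (simp add: power2_eq_square)
qed

lemma abs_linear_increment_le: "\<bar>linear_increment \<sigma> u N\<bar> \<le> q\<^sup>2"
proof -
  have "\<bar>if k \<le> N + 1 then discrepancy \<sigma> k else 0\<bar> \<le> real q" for k
    using abs_discrepancy_le[of \<sigma> k] by simp
  then have "\<bar>linear_increment \<sigma> u N\<bar> \<le> (\<Sum>k\<in>{u * q..<u * q + q}. real q)"
    unfolding linear_increment_def by (intro order_trans[OF sum_abs sum_mono])
  then show ?thesis
    by (simp add: power2_eq_square)
qed

lemma quadratic_correction_eq_0:
  assumes "u \<noteq> N div (2 * q)"
  shows "quadratic_correction \<sigma> u N = 0"
proof -
  have "N < 2 * u * q \<or> 2 * u * q + 2 * q \<le> N"
  proof (rule ccontr)
    assume "\<not> (N < 2 * u * q \<or> 2 * u * q + 2 * q \<le> N)"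
    then have "N div (2 * q) = u"
      by (intro div_nat_eqI) (auto simp: algebra_simps)
    then show False
      using assms by simp
  qed
  then show ?thesis
  proof
    assume "N < 2 * u * q"
    then show ?thesis
      unfolding quadratic_correction_def by (intro sum.neutral) auto
  next
    assume N: "2 * u * q + 2 * q \<le> N"
    have "quadratic_correction \<sigma> u N
        = (\<Sum>k\<in>{u * q..<u * q + q}. (discrepancy \<sigma> (Suc k))\<^sup>2 - (discrepancy \<sigma> k)\<^sup>2)"
      unfolding quadratic_correction_def
    proof (intro sum.cong refl)
      fix k assume "k \<in> {u * q..<u * q + q}"
      then have "2 * k \<le> N" "min k (N + 1 - k) = k" "min (u * q) (N + 1 - k) = u * q"
        using N by auto
      then show "(if 2 * k \<le> N then (deviation \<sigma> k)\<^sup>2 else 0) + 2 * deviation \<sigma> k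
          * (discrepancy \<sigma> (min k (N + 1 - k)) - discrepancy \<sigma> (min (u * q) (N + 1 - k)))
          = (discrepancy \<sigma> (Suc k))\<^sup>2 - (discrepancy \<sigma> k)\<^sup>2"
        using discrepancy_block_start[of \<sigma> u]
        by (simp add: discrepancy_Suc power2_eq_square algebra_simps)
    qed
    also have "\<dots> = (discrepancy \<sigma> (u * q + q))\<^sup>2 - (discrepancy \<sigma> (u * q))\<^sup>2"
      by (rule sum_Suc_diff') simp
    also have "\<dots> = 0"
      using discrepancy_block_start[of \<sigma> u] discrepancy_block_start[of \<sigma> "Suc u"]
      by (simp add: add.commute)
    finally show ?thesis .
  qed
qed

lemma abs_quadratic_correction_le: "\<bar>quadratic_correction \<sigma> u N\<bar> \<le> 5 * q\<^sup>2"
proof -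
  have "\<bar>(if c then (deviation \<sigma> k)\<^sup>2 else 0) + 2 * deviation \<sigma> k * (discrepancy \<sigma> a - discrepancy \<sigma> b)\<bar>
      \<le> 5 * real q" for c k a b
  proof -
    have "\<bar>deviation \<sigma> k\<bar> * \<bar>discrepancy \<sigma> a - discrepancy \<sigma> b\<bar> \<le> 1 * (2 * real q)"
      using abs_discrepancy_le[of \<sigma> a] abs_discrepancy_le[of \<sigma> b]
      by (intro mult_mono abs_deviation_le) auto
    then have "\<bar>2 * deviation \<sigma> k * (discrepancy \<sigma> a - discrepancy \<sigma> b)\<bar> \<le> 4 * real q"
      by (simp add: abs_mult)
    moreover have "\<bar>if c then (deviation \<sigma> k)\<^sup>2 else 0\<bar> \<le> 1"
      using abs_deviation_le[of \<sigma> k] by (simp add: abs_le_square_iff[of _ 1, simplified])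
    moreover have "1 \<le> real q"
      using q_pos by simp
    ultimately show ?thesis
      by (smt (verit) abs_triangle_ineq)
  qed
  then have "\<bar>quadratic_correction \<sigma> u N\<bar> \<le> (\<Sum>k\<in>{u * q..<u * q + q}. 5 * real q)"
    unfolding quadratic_correction_def by (intro order_trans[OF sum_abs sum_mono])
  then show ?thesis
    by (simp add: power2_eq_square)
qed

lemma abs_sum_quadratic_correction_le: "\<bar>\<Sum>u<M. quadratic_correction \<sigma> u N\<bar> \<le> 5 * q\<^sup>2"
proof -
  have "(\<Sum>u<M. quadratic_correction \<sigma> u N)
      = (\<Sum>u<M. if u = N div (2 * q) then quadratic_correction \<sigma> u N else 0)"
    by (intro sum.cong refl) (auto simp: quadratic_correction_eq_0)
  then show ?thesis
    using abs_quadratic_correction_le[of \<sigma> "N div (2 * q)" N] by (simp add: sum.delta)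
qed

lemma sum_R_block_set:
  "real (\<Sum>n\<le>N. R (block_set \<sigma>) n) = density\<^sup>2 * ((real N + 1) * (real N + 2) / 2)
     + 2 * density * (\<Sum>u<N + 1. linear_increment \<sigma> u N)
     + (\<Sum>u<N + 1. quadratic_increment \<sigma> u N) + (\<Sum>u<N + 1. quadratic_correction \<sigma> u N)"
proof -
  define K where "K = (N + 1) * q"
  have "(N + 1) * 2 \<le> K"
    unfolding K_def using p_pos p_less_q by (intro mult_le_mono2) simp
  then have K: "N + 1 < K"
    by simp
  have "real (\<Sum>n\<le>N. R (block_set \<sigma>) n)
      = (\<Sum>n\<le>N. \<Sum>a\<le>n. (density + deviation \<sigma> a) * (density + deviation \<sigma> (n - a)))"
    by (simp add: real_R_eq_sum deviation_def)
  also have "\<dots> = density\<^sup>2 * ((real N + 1) * (real N + 2) / 2)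
      + 2 * density * (\<Sum>k\<le>N + 1. discrepancy \<sigma> k)
      + (\<Sum>k<K. (if 2 * k \<le> N then (deviation \<sigma> k)\<^sup>2 else 0)
          + 2 * deviation \<sigma> k * discrepancy \<sigma> (min k (N + 1 - k)))"
    using sum_convolution_shifted[of N K] K by (simp add: discrepancy_def)
  also have "(\<Sum>k\<le>N + 1. discrepancy \<sigma> k) = (\<Sum>u<N + 1. linear_increment \<sigma> u N)"
  proof -
    have "{k \<in> {..<K}. k \<le> N + 1} = {..N + 1}"
      using K by auto
    then have "(\<Sum>k\<le>N + 1. discrepancy \<sigma> k) = (\<Sum>k<K. if k \<le> N + 1 then discrepancy \<sigma> k else 0)"
      by (simp add: sum.inter_filter[symmetric])
    then show ?thesis
      unfolding linear_increment_def K_def by (simp add: sum.nat_group)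
  qed
  also have "(\<Sum>k<K. (if 2 * k \<le> N then (deviation \<sigma> k)\<^sup>2 else 0)
          + 2 * deviation \<sigma> k * discrepancy \<sigma> (min k (N + 1 - k)))
      = (\<Sum>u<N + 1. quadratic_increment \<sigma> u N + quadratic_correction \<sigma> u N)"
    unfolding K_def sum.nat_group[symmetric] quadratic_increment_def quadratic_correction_def
    by (simp add: sum.distrib[symmetric] algebra_simps)
  finally show ?thesis
    by (simp add: sum.distrib)
qed

lemma choice_martingales_increments:
  "choice_martingales {..<q}
    (\<lambda>\<sigma> u i. if even i then quadratic_increment \<sigma> u (i div 2) else linear_increment \<sigma> u (i div 2))
    (2 * q\<^sup>2)"
proof
  show "finite {..<q}" "{..<q} \<noteq> {}"
    using q_pos by auto
  show "(if even i then quadratic_increment \<sigma> u (i div 2) else linear_increment \<sigma> u (i div 2))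
      = (if even i then quadratic_increment \<sigma>' u (i div 2) else linear_increment \<sigma>' u (i div 2))"
    if "\<And>v. v \<le> u \<Longrightarrow> \<sigma> v = \<sigma>' v" for \<sigma> \<sigma>' u i
    using quadratic_increment_cong[OF that] linear_increment_cong[OF that] by simp
  show "(\<Sum>s<q. if even i then quadratic_increment (\<sigma>(u := s)) u (i div 2)
      else linear_increment (\<sigma>(u := s)) u (i div 2)) = 0" for \<sigma> u i
    by (cases "even i") (simp_all add: sum_quadratic_increment_choices sum_linear_increment_choices)
  show "\<bar>if even i then quadratic_increment \<sigma> u (i div 2) else linear_increment \<sigma> u (i div 2)\<bar>
      \<le> 2 * q\<^sup>2" for \<sigma> u i
  proof -
    have "(real q)\<^sup>2 \<le> 2 * (real q)\<^sup>2"
      by simp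
    then show ?thesis
      using abs_quadratic_increment_le[of \<sigma> u "i div 2"] abs_linear_increment_le[of \<sigma> u "i div 2"]
      by auto
  qed
qed

lemma exists_block_set_error_bound:
  "\<exists>\<sigma> C. \<forall>N. \<bar>real (\<Sum>n\<le>N. R (block_set \<sigma>) n) - (0.5 * density\<^sup>2 * real N ^ 2 + 1.5 * density\<^sup>2 * real N)\<bar>
      \<le> C * (1 + sqrt ((2 * real N + 2) * ln (2 * real N + 3)))"
proof -
  interpret choice_martingales "{..<q}"
    "\<lambda>\<sigma> u i. if even i then quadratic_increment \<sigma> u (i div 2) else linear_increment \<sigma> u (i div 2)"
    "2 * q\<^sup>2"
    by (rule choice_martingales_increments)
  obtain \<sigma> C where \<sigma>: "\<And>i t. t \<le> i + 1 \<Longrightarrow>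
      \<bar>\<Sum>u<t. if even i then quadratic_increment \<sigma> u (i div 2) else linear_increment \<sigma> u (i div 2)\<bar>
      \<le> C * sqrt ((real i + 1) * ln (real i + 2))"
    using exists_choices_with_sqrt_log_partial_sums by blast
  have "0 \<le> C * sqrt (ln 2)"
    using \<sigma>[of 0 0] by simp
  then have C: "0 \<le> C"
    by (simp add: zero_le_mult_iff)
  define s where "s N = sqrt ((2 * real N + 2) * ln (2 * real N + 3))" for N
  have widen: "C * sqrt ((real i + 1) * ln (real i + 2)) \<le> C * s N" if "i \<le> 2 * N + 1" for i N
    unfolding s_def using that C by (intro mult_left_mono real_sqrt_le_mono mult_mono) auto
  have "\<bar>real (\<Sum>n\<le>N. R (block_set \<sigma>) n) - (0.5 * density\<^sup>2 * real N ^ 2 + 1.5 * density\<^sup>2 * real N)\<bar>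
      \<le> (3 * C + 5 * q\<^sup>2 + 1) * (1 + s N)" for N
  proof -
    let ?L = "\<Sum>u<N + 1. linear_increment \<sigma> u N"
    let ?Q = "\<Sum>u<N + 1. quadratic_increment \<sigma> u N"
    let ?Q' = "\<Sum>u<N + 1. quadratic_correction \<sigma> u N"
    have "\<bar>?Q\<bar> \<le> C * s N"
      using \<sigma>[of "N + 1" "2 * N"] widen[of "2 * N" N] by simp
    moreover have "\<bar>2 * density * ?L\<bar> \<le> 2 * (C * s N)"
      using \<sigma>[of "N + 1" "2 * N + 1"] widen[of "2 * N + 1" N] density_bounds
      by (simp add: abs_mult mult_le_one mult_mono)
    moreover have "\<bar>?Q'\<bar> \<le> 5 * q\<^sup>2"
      by (rule abs_sum_quadratic_correction_le)
    moreover have "0 < density\<^sup>2" "density\<^sup>2 \<le> 1"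
      using density_bounds by (simp_all add: power_le_one)
    moreover have "\<bar>density\<^sup>2 + 2 * density * ?L + ?Q + ?Q'\<bar> \<le> density\<^sup>2 + \<bar>2 * density * ?L\<bar> + \<bar>?Q\<bar> + \<bar>?Q'\<bar>"
      by (smt (verit) abs_triangle_ineq zero_le_power2)
    moreover have "0 \<le> C * s N" "0 \<le> q\<^sup>2 * s N" "0 \<le> s N"
      using C by (simp_all add: s_def)
    moreover have "(3 * C + 5 * q\<^sup>2 + 1) * (1 + s N) = 3 * C + 3 * (C * s N) + 5 * q\<^sup>2 + 5 * (q\<^sup>2 * s N) + 1 + s N"
      by (simp add: algebra_simps)
    moreover have "0.5 * density\<^sup>2 * real N ^ 2 + 1.5 * density\<^sup>2 * real N
        = density\<^sup>2 * ((real N + 1) * (real N + 2) / 2) - density\<^sup>2"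
      by (simp add: algebra_simps power2_eq_square)
    ultimately show ?thesis
      using C sum_R_block_set[where N = N and \<sigma> = \<sigma>] by linarith
  qed
  then show ?thesis
    unfolding s_def by blast
qed

lemma sum_R_block_set_asymptotics:
  "\<exists>\<sigma>. (\<lambda>N. real (\<Sum>n\<le>N. R (block_set \<sigma>) n) - (0.5 * density\<^sup>2 * real N ^ 2 + 1.5 * density\<^sup>2 * real N))
    \<in> O(\<lambda>N. sqrt (real N) * sqrt (ln (real N)))"
proof -
  obtain \<sigma> C where C: "\<And>N. \<bar>real (\<Sum>n\<le>N. R (block_set \<sigma>) n) - (0.5 * density\<^sup>2 * real N ^ 2 + 1.5 * density\<^sup>2 * real N)\<bar>
      \<le> C * (1 + sqrt ((2 * real N + 2) * ln (2 * real N + 3)))"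
    using exists_block_set_error_bound by blast
  have "(\<lambda>N. real (\<Sum>n\<le>N. R (block_set \<sigma>) n) - (0.5 * density\<^sup>2 * real N ^ 2 + 1.5 * density\<^sup>2 * real N))
      \<in> O(\<lambda>N. 1 + sqrt ((2 * real N + 2) * ln (2 * real N + 3)))"
    by (intro bigoI[where c = C] always_eventually allI) (use C in simp)
  also have "(\<lambda>N. 1 + sqrt ((2 * real N + 2) * ln (2 * real N + 3))) \<in> O(\<lambda>N. sqrt (real N) * sqrt (ln (real N)))"
    by real_asymp
  finally show ?thesis
    by blast
qed

end

theorem theorem6:
  fixes p q :: int
  assumes "0 < p" and "p < q"
  shows "\<exists>A :: nat set.
    (\<lambda>N::nat. real (\<Sum>n\<le>N. R A n)
        - (0.5 * (real_of_int p ^ 2 / real_of_int q ^ 2) * real N ^ 2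
           + 1.5 * (real_of_int p ^ 2 / real_of_int q ^ 2) * real N))
    \<in> O(\<lambda>N. sqrt (real N) * sqrt (ln (real N)))"
proof -
  interpret rotated_blocks "nat p" "nat q"
    using assms by unfold_locales auto
  have "density\<^sup>2 = real_of_int p ^ 2 / real_of_int q ^ 2"
    using assms by (simp add: density_def power_divide)
  then show ?thesis
    using sum_R_block_set_asymptotics by auto
qed

end
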